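(* For any diagonal section $\delta$, the function $U_\delta\colon[0,1]^2\to[0,1]$ defined by $$U_\delta(x,y)=\min\left\{x,\;y,\;y-\frac12\left(\widehat{\delta}(x)+\widehat{\delta}(y)+\mathrm{TV}_x^y(\widehat{\delta})\right)\right\}$$ is a copula with diagonal section $\delta$, i.e. $U_\delta$ is a copula and $U_\delta(t,t)=\delta(t)$ for all $t\in[0,1]$.
   Context: $\mathbb{I}=[0,1]$. A (bivariate) copula is a function $C\colon\mathbb{I}^2\to\mathbb{I}$ with $C(x,0)=C(0,y)=0$, $C(x,1)=x$, $C(1,y)=y$ for all $x,y$, and $C(b,d)+C(a,c)-C(b,c)-C(a,d)\ge 0$ for all $a\le b$, $c\le d$ in $\mathbb{I}$. A diagonal section is a function $\delta\colon\mathbb{I}\to\mathbb{I}$ with $\delta(x)\le x$ for all $x$, $0\le\delta(y)-\delta(x)\le 2(y-x)$ whenever $x\le y$, and $\delta(1)=1$. Write $\widehat{\delta}(x)=x-\delta(x)$. For $f\colon\mathbb{I}\to\mathbb{R}$ and $0\le x\le y\le1$, $\mathrm{TV}_x^y(f)=\sup\{\sum_{i=1}^n|f(x_i)-f(x_{i-1})|: x=x_0<x_1<\dots<x_n=y\}$ is the total variation of $f$ on $[x,y]$; for $y<x$ one sets $\mathrm{TV}_x^y(f)=-\mathrm{TV}_y^x(f)$. *)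

theory Defs
  imports Complex_Main
begin

definition is_copula :: "(real \<Rightarrow> real \<Rightarrow> real) \<Rightarrow> bool" where
  "is_copula C \<longleftrightarrow>
     (\<forall>x\<in>{0..1}. \<forall>y\<in>{0..1}. C x y \<in> {0..1}) \<and>
     (\<forall>x\<in>{0..1}. C x 0 = 0 \<and> C 0 x = 0 \<and> C x 1 = x \<and> C 1 x = x) \<and>
     (\<forall>a b c d. a \<in> {0..1} \<and> b \<in> {0..1} \<and> c \<in> {0..1} \<and> d \<in> {0..1} \<and> a \<le> b \<and> c \<le> d
        \<longrightarrow> C b d + C a c - C b c - C a d \<ge> 0)"

definition is_diagonal_section :: "(real \<Rightarrow> real) \<Rightarrow> bool" where
  "is_diagonal_section \<delta> \<longleftrightarrow>
     (\<forall>x\<in>{0..1}. \<delta> x \<in> {0..1} \<and> \<delta> x \<le> x) \<and>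
     (\<forall>x\<in>{0..1}. \<forall>y\<in>{0..1}. x \<le> y \<longrightarrow> 0 \<le> \<delta> y - \<delta> x \<and> \<delta> y - \<delta> x \<le> 2 * (y - x)) \<and>
     \<delta> 1 = 1"

definition diag_hat :: "(real \<Rightarrow> real) \<Rightarrow> real \<Rightarrow> real" where
  "diag_hat \<delta> x = x - \<delta> x"

definition TV_pos :: "(real \<Rightarrow> real) \<Rightarrow> real \<Rightarrow> real \<Rightarrow> real" where
  "TV_pos f x y = Sup {(\<Sum>i\<in>{1..n}. \<bar>f (p i) - f (p (i - 1))\<bar>) | n p.
       p 0 = x \<and> p n = y \<and> (\<forall>i<n. p i < p (Suc i))}"

definition TV :: "(real \<Rightarrow> real) \<Rightarrow> real \<Rightarrow> real \<Rightarrow> real" where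
  "TV f x y = (if x \<le> y then TV_pos f x y else - TV_pos f y x)"

definition U_delta :: "(real \<Rightarrow> real) \<Rightarrow> real \<Rightarrow> real \<Rightarrow> real" where
  "U_delta \<delta> x y = min x (min y (y - (diag_hat \<delta> x + diag_hat \<delta> y + TV (diag_hat \<delta>) x y) / 2))"

end

theory Submission
  imports Defs "HOL-Analysis.Lipschitz"
begin

text \<open>Since \<delta> is increasing and 2-Lipschitz, \<open>h x = x - \<delta> x\<close> is 1-Lipschitz, so its
  cumulative variation \<open>V x = TV\<^sub>0\<^sup>x(h)\<close> is finite, additive (\<open>TV\<^sub>x\<^sup>y(h) = V y - V x\<close>) and
  satisfies \<open>\<bar>h y - h x\<bar> \<le> V y - V x \<le> y - x\<close> for \<open>x \<le> y\<close>.  Then \<open>U\<^sub>\<delta> = min {x, y, A x y}\<close>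
  with the affine part \<open>A x y = y - (h x + h y + V y - V x) / 2\<close>, which is modular:
  \<open>A b d + A a c = A b c + A a d\<close>.  Together with the two increment bounds this makes each
  of the nine choices of minima in \<open>U b d + U a c\<close> dominate \<open>U b c + U a d\<close>.  The boundary
  conditions are the same increment bounds at the end points (\<open>h 0 = h 1 = 0\<close>), and on the
  diagonal \<open>U t t = t - h t = \<delta> t\<close>.\<close>

definition partition_of :: "(nat \<Rightarrow> real) \<Rightarrow> nat \<Rightarrow> real \<Rightarrow> real \<Rightarrow> bool" where
  "partition_of p n x y \<longleftrightarrow> p 0 = x \<and> p n = y \<and> (\<forall>i<n. p i < p (Suc i))"

definition variation_sum :: "(real \<Rightarrow> real) \<Rightarrow> (nat \<Rightarrow> real) \<Rightarrow> nat \<Rightarrow> real" where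
  "variation_sum f p n = (\<Sum>i\<in>{1..n}. \<bar>f (p i) - f (p (i - 1))\<bar>)"

definition variation_sums :: "(real \<Rightarrow> real) \<Rightarrow> real \<Rightarrow> real \<Rightarrow> real set" where
  "variation_sums f x y = {variation_sum f p n | n p. partition_of p n x y}"

lemma TV_pos_eq_Sup_variation_sums: "TV_pos f x y = Sup (variation_sums f x y)"
  by (simp add: TV_pos_def variation_sums_def variation_sum_def partition_of_def)

lemma variation_sum_0 [simp]: "variation_sum f p 0 = 0"
  by (simp add: variation_sum_def)

lemma variation_sum_Suc [simp]:
  "variation_sum f p (Suc n) = variation_sum f p n + \<bar>f (p (Suc n)) - f (p n)\<bar>"
  by (simp add: variation_sum_def)

lemma variation_sum_cong:
  "(\<And>i. i \<le> n \<Longrightarrow> p i = q i) \<Longrightarrow> variation_sum f p n = variation_sum f q n"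
  unfolding variation_sum_def by (intro sum.cong) auto

lemma partition_of_Suc: "partition_of p (Suc n) x z \<Longrightarrow> partition_of p n x (p n)"
  by (simp add: partition_of_def)

lemma partition_of_mono:
  assumes "partition_of p n x y" "i \<le> j" "j \<le> n"
  shows "p i \<le> p j"
  using assms(2,3)
proof (induction j rule: dec_induct)
  case (step k)
  then have "p k < p (Suc k)"
    using assms(1) by (simp add: partition_of_def)
  with step show ?case by simp
qed simp

lemma abs_diff_in_variation_sums:
  assumes "x \<le> y"
  shows "\<bar>f y - f x\<bar> \<in> variation_sums f x y"
proof (cases "x = y")
  case True
  then have "partition_of (\<lambda>_. x) 0 x y"
    by (simp add: partition_of_def)
  then show ?thesis
    unfolding variation_sums_def using True by force
next
  case False
  then have "partition_of (\<lambda>i. if i = 0 then x else y) 1 x y"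
    using assms by (simp add: partition_of_def)
  then show ?thesis
    unfolding variation_sums_def by force
qed

lemma variation_sum_append:
  assumes "q 0 = p n"
  shows "variation_sum f (\<lambda>i. if i \<le> n then p i else q (i - n)) (n + m)
    = variation_sum f p n + variation_sum f q m"
proof (induction m)
  case 0
  have "variation_sum f (\<lambda>i. if i \<le> n then p i else q (i - n)) n = variation_sum f p n"
    by (rule variation_sum_cong) simp
  then show ?case
    by simp
next
  case (Suc m)
  have "(if n + m \<le> n then p (n + m) else q (n + m - n)) = q m"
    using assms by (cases m) auto
  with Suc.IH show ?case
    by simp
qed

lemma partition_of_append:
  assumes "partition_of p n x y" "partition_of q m y z"
  shows "partition_of (\<lambda>i. if i \<le> n then p i else q (i - n)) (n + m) x z"
  unfolding partition_of_def
proof (intro conjI allI impI)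
  fix i assume "i < n + m"
  then show "(if i \<le> n then p i else q (i - n)) < (if Suc i \<le> n then p (Suc i) else q (Suc i - n))"
    using assms by (cases "i < n"; cases "i = n") (auto simp: partition_of_def Suc_diff_le)
qed (use assms in \<open>auto simp: partition_of_def\<close>)

lemma variation_sums_append:
  assumes "s \<in> variation_sums f x y" "t \<in> variation_sums f y z"
  shows "s + t \<in> variation_sums f x z"
proof -
  obtain n p where p: "partition_of p n x y" "s = variation_sum f p n"
    using assms(1) by (auto simp: variation_sums_def)
  obtain m q where q: "partition_of q m y z" "t = variation_sum f q m"
    using assms(2) by (auto simp: variation_sums_def)
  define r where "r = (\<lambda>i. if i \<le> n then p i else q (i - n))"
  have "partition_of r (n + m) x z"
    unfolding r_def using p(1) q(1) by (rule partition_of_append)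
  moreover have "variation_sum f r (n + m) = s + t"
    using p q by (simp add: r_def partition_of_def variation_sum_append)
  ultimately show ?thesis
    unfolding variation_sums_def by force
qed

lemma cSup_add_le:
  fixes A B :: "'a :: {conditionally_complete_lattice, ordered_ab_group_add} set"
  assumes "A \<noteq> {}" "B \<noteq> {}" "\<And>a b. a \<in> A \<Longrightarrow> b \<in> B \<Longrightarrow> a + b \<le> c"
  shows "Sup A + Sup B \<le> c"
proof -
  have "a \<le> c - Sup B" if "a \<in> A" for a
  proof -
    have "Sup B \<le> c - a"
      using assms(2) by (rule cSup_least) (metis assms(3) that le_diff_eq add.commute)
    then show ?thesis
      by (metis le_diff_eq add.commute)
  qed
  then have "Sup A \<le> c - Sup B"
    by (rule cSup_least[OF assms(1)])
  then show ?thesis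
    by (simp add: le_diff_eq)
qed

lemma bdd_above_variation_sums_subinterval:
  assumes "bdd_above (variation_sums f a b)" "a \<le> x" "x \<le> y" "y \<le> b"
  shows "bdd_above (variation_sums f x y)"
proof -
  obtain B where B: "\<And>s. s \<in> variation_sums f a b \<Longrightarrow> s \<le> B"
    using assms(1) by (auto simp: bdd_above_def)
  have "s \<le> B" if "s \<in> variation_sums f x y" for s
  proof -
    have "\<bar>f x - f a\<bar> + s + \<bar>f b - f y\<bar> \<in> variation_sums f a b"
      using that assms(2-4) abs_diff_in_variation_sums[of a x f] abs_diff_in_variation_sums[of y b f]
      by (intro variation_sums_append) auto
    then show ?thesis
      using B by force
  qed
  then show ?thesis
    by (auto simp: bdd_above_def)
qed

lemma variation_sum_le_TV_pos:
  assumes "bdd_above (variation_sums f x y)" "partition_of p n x y"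
  shows "variation_sum f p n \<le> TV_pos f x y"
  unfolding TV_pos_eq_Sup_variation_sums
  using assms by (intro cSup_upper) (auto simp: variation_sums_def)

lemma abs_diff_le_TV_pos:
  assumes "bdd_above (variation_sums f x y)" "x \<le> y"
  shows "\<bar>f y - f x\<bar> \<le> TV_pos f x y"
  unfolding TV_pos_eq_Sup_variation_sums
  using assms abs_diff_in_variation_sums by (intro cSup_upper)

lemma TV_pos_superadditive:
  assumes "bdd_above (variation_sums f x z)" "x \<le> y" "y \<le> z"
  shows "TV_pos f x y + TV_pos f y z \<le> TV_pos f x z"
  unfolding TV_pos_eq_Sup_variation_sums
  using assms abs_diff_in_variation_sums
  by (intro cSup_add_le cSup_upper variation_sums_append) auto

lemma variation_sum_le_split:
  assumes "bdd_above (variation_sums f x z)" "partition_of p n x z" "x \<le> y" "y \<le> z"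
  shows "variation_sum f p n \<le> TV_pos f x y + TV_pos f y z"
  using assms
proof (induction n arbitrary: z)
  case 0
  then have "x = y" "y = z"
    by (auto simp: partition_of_def)
  then show ?case
    using abs_diff_le_TV_pos[OF "0.prems"(1)] by fastforce
next
  case (Suc n)
  define w where "w = p n"
  have part: "partition_of p n x w"
    using Suc.prems(2) by (simp add: partition_of_Suc w_def)
  have "x \<le> w" "w < z"
    using partition_of_mono[OF Suc.prems(2), of 0 n] Suc.prems(2)
    by (auto simp: partition_of_def w_def)
  note bdd = bdd_above_variation_sums_subinterval[OF Suc.prems(1)]
  have last: "variation_sum f p (Suc n) = variation_sum f p n + \<bar>f z - f w\<bar>"
    using Suc.prems(2) by (simp add: partition_of_def w_def)
  show ?case
  proof (cases "y \<le> w")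
    case True
    have "variation_sum f p n \<le> TV_pos f x y + TV_pos f y w"
      using Suc.IH[OF _ part] bdd \<open>x \<le> w\<close> \<open>w < z\<close> Suc.prems(3) True by simp
    moreover have "\<bar>f z - f w\<bar> \<le> TV_pos f w z"
      using abs_diff_le_TV_pos bdd \<open>x \<le> w\<close> \<open>w < z\<close> by simp
    moreover have "TV_pos f y w + TV_pos f w z \<le> TV_pos f y z"
      using TV_pos_superadditive bdd Suc.prems(3) True \<open>w < z\<close> by simp
    ultimately show ?thesis
      using last by linarith
  next
    case False
    have "variation_sum f p n \<le> TV_pos f x w"
      using variation_sum_le_TV_pos[OF _ part] bdd \<open>x \<le> w\<close> \<open>w < z\<close> by simp
    moreover have "\<bar>f y - f w\<bar> \<le> TV_pos f w y" "\<bar>f z - f y\<bar> \<le> TV_pos f y z"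
      using abs_diff_le_TV_pos bdd \<open>x \<le> w\<close> False Suc.prems(4) by simp_all
    moreover have "TV_pos f x w + TV_pos f w y \<le> TV_pos f x y"
      using TV_pos_superadditive bdd \<open>x \<le> w\<close> False Suc.prems(4) by simp
    ultimately show ?thesis
      using last by linarith
  qed
qed

lemma TV_pos_additive:
  assumes "bdd_above (variation_sums f x z)" "x \<le> y" "y \<le> z"
  shows "TV_pos f x z = TV_pos f x y + TV_pos f y z"
proof (rule order.antisym)
  show "TV_pos f x z \<le> TV_pos f x y + TV_pos f y z"
    unfolding TV_pos_eq_Sup_variation_sums[of f x z]
    using assms abs_diff_in_variation_sums[of x z f] variation_sum_le_split[OF assms(1) _ assms(2,3)]
    by (intro cSup_least) (auto simp: variation_sums_def)
qed (rule TV_pos_superadditive[OF assms])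

lemma TV_eq_diff_TV_pos:
  assumes "bdd_above (variation_sums f a b)" "x \<in> {a..b}" "y \<in> {a..b}"
  shows "TV f x y = TV_pos f a y - TV_pos f a x"
proof (cases "x \<le> y")
  case True
  have "TV_pos f a y = TV_pos f a x + TV_pos f x y"
    using assms True by (intro TV_pos_additive bdd_above_variation_sums_subinterval[OF assms(1)]) auto
  with True show ?thesis
    by (simp add: TV_def)
next
  case False
  have "TV_pos f a x = TV_pos f a y + TV_pos f y x"
    using assms False by (intro TV_pos_additive bdd_above_variation_sums_subinterval[OF assms(1)]) auto
  with False show ?thesis
    by (simp add: TV_def)
qed

lemma variation_sum_le_lipschitz:
  assumes "C-lipschitz_on {x..y} f" "partition_of p n x y"
  shows "variation_sum f p n \<le> C * (y - x)"
  using assms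
proof (induction n arbitrary: y)
  case (Suc n)
  define w where "w = p n"
  have "x \<le> w" "w < y"
    using partition_of_mono[OF Suc.prems(2), of 0 n] Suc.prems(2)
    by (auto simp: partition_of_def w_def)
  then have "variation_sum f p n \<le> C * (w - x)"
    using Suc.prems Suc.IH[OF lipschitz_on_subset[OF Suc.prems(1)]]
    by (simp add: partition_of_Suc w_def)
  moreover have "\<bar>f y - f w\<bar> \<le> C * (y - w)"
    using lipschitz_onD[OF Suc.prems(1), of y w] \<open>x \<le> w\<close> \<open>w < y\<close> by (simp add: dist_real_def)
  ultimately show ?case
    using Suc.prems(2) by (simp add: partition_of_def w_def algebra_simps)
qed (simp add: partition_of_def)

lemma bdd_above_variation_sums_lipschitz:
  "C-lipschitz_on {x..y} f \<Longrightarrow> bdd_above (variation_sums f x y)"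
  by (auto simp: bdd_above_def variation_sums_def intro: variation_sum_le_lipschitz)

lemma TV_pos_le_lipschitz:
  assumes "C-lipschitz_on {x..y} f" "x \<le> y"
  shows "TV_pos f x y \<le> C * (y - x)"
  unfolding TV_pos_eq_Sup_variation_sums
proof (rule cSup_least)
  show "variation_sums f x y \<noteq> {}"
    using abs_diff_in_variation_sums[OF assms(2)] by blast
qed (auto simp: variation_sums_def intro: variation_sum_le_lipschitz[OF assms(1)])

lemma TV_pos_increment_lipschitz:
  assumes "C-lipschitz_on {a..b} f" "a \<le> x" "x \<le> y" "y \<le> b"
  shows "\<bar>f y - f x\<bar> \<le> TV_pos f a y - TV_pos f a x \<and> TV_pos f a y - TV_pos f a x \<le> C * (y - x)"
proof -
  have lip_xy: "C-lipschitz_on {x..y} f" and lip_ay: "C-lipschitz_on {a..y} f"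
    using assms by (auto intro: lipschitz_on_subset[OF assms(1)])
  have "TV_pos f a y - TV_pos f a x = TV_pos f x y"
    using TV_pos_additive[OF bdd_above_variation_sums_lipschitz[OF lip_ay], of x] assms by simp
  then show ?thesis
    using abs_diff_le_TV_pos[OF bdd_above_variation_sums_lipschitz[OF lip_xy]]
      TV_pos_le_lipschitz[OF lip_xy] assms(3)
    by simp
qed

definition U_of :: "(real \<Rightarrow> real) \<Rightarrow> (real \<Rightarrow> real) \<Rightarrow> real \<Rightarrow> real \<Rightarrow> real" where
  "U_of h V x y = min x (min y (y - (h x + h y + (V y - V x)) / 2))"

lemma U_of_2_increasing:
  assumes "\<bar>h b - h a\<bar> \<le> V b - V a" "V b - V a \<le> b - a"
    and "\<bar>h d - h c\<bar> \<le> V d - V c" "V d - V c \<le> d - c"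
  shows "U_of h V b d + U_of h V a c - U_of h V b c - U_of h V a d \<ge> 0"
proof -
  define A where "A x y = y - (h x + h y + (V y - V x)) / 2" for x y
  have U_le: "U_of h V x y \<le> x" "U_of h V x y \<le> y" "U_of h V x y \<le> A x y" for x y
    by (simp_all add: U_of_def A_def)
  have U_cases: "U_of h V x y = x \<or> U_of h V x y = y \<or> U_of h V x y = A x y" for x y
    by (simp add: U_of_def A_def min_def)
  have "A b d + A a c = A b c + A a d"
    by (simp add: A_def field_simps)
  moreover have "A b c \<le> A b d" "A a d \<le> A b d" "a - b \<le> A a c - A b c" "c - d \<le> A a c - A a d"
    using assms by (simp_all add: A_def abs_le_iff field_simps)
  moreover have "a \<le> b" "c \<le> d"
    using assms by linarith+
  ultimately show ?thesis
    using U_cases[of b d] U_cases[of a c] U_le[of b c] U_le[of a d] by (elim disjE; linarith)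
qed

lemma is_copula_U_of:
  assumes "h 0 = 0" "h 1 = 0"
    and hV: "\<And>x y. 0 \<le> x \<Longrightarrow> x \<le> y \<Longrightarrow> y \<le> 1 \<Longrightarrow> \<bar>h y - h x\<bar> \<le> V y - V x \<and> V y - V x \<le> y - x"
  shows "is_copula (U_of h V)"
proof -
  have boundary: "U_of h V x 0 = 0 \<and> U_of h V 0 x = 0 \<and> U_of h V x 1 = x \<and> U_of h V 1 x = x"
    if "x \<in> {0..1}" for x
  proof -
    have "\<bar>h x\<bar> \<le> V x - V 0" "V x - V 0 \<le> x" "\<bar>h x\<bar> \<le> V 1 - V x" "V 1 - V x \<le> 1 - x"
      using hV[of 0 x] hV[of x 1] that assms(1,2) by auto
    then have "(h x + h 0 + (V 0 - V x)) / 2 \<le> 0" "(h 0 + h x + (V x - V 0)) / 2 \<le> x"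
      "(h x + h 1 + (V 1 - V x)) / 2 \<le> 1 - x" "(h 1 + h x + (V x - V 1)) / 2 \<le> 0"
      using assms(1,2) by (simp_all add: abs_le_iff)
    then show ?thesis
      using that by (auto simp: U_of_def min_def field_simps)
  qed
  have increasing: "U_of h V b d + U_of h V a c - U_of h V b c - U_of h V a d \<ge> 0"
    if "a \<in> {0..1}" "b \<in> {0..1}" "c \<in> {0..1}" "d \<in> {0..1}" "a \<le> b" "c \<le> d" for a b c d
    using that hV[of a b] hV[of c d] by (intro U_of_2_increasing) auto
  have "U_of h V x y \<in> {0..1}" if "x \<in> {0..1}" "y \<in> {0..1}" for x y
  proof -
    have "0 \<le> U_of h V x y"
      using increasing[of 0 x 0 y] boundary[of 0] boundary[of x] boundary[of y] that by simp
    moreover have "U_of h V x y \<le> x"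
      by (simp add: U_of_def)
    ultimately show ?thesis
      using that by simp
  qed
  with boundary increasing show ?thesis
    unfolding is_copula_def by blast
qed

lemma U_of_diagonal: "0 \<le> h t \<Longrightarrow> U_of h V t t = t - h t"
  by (simp add: U_of_def min_def)

lemma is_copula_cong:
  assumes "\<And>x y. x \<in> {0..1} \<Longrightarrow> y \<in> {0..1} \<Longrightarrow> C x y = D x y"
  shows "is_copula C \<longleftrightarrow> is_copula D"
  unfolding is_copula_def by (simp add: assms)

lemma diag_hat_lipschitz:
  assumes "is_diagonal_section \<delta>"
  shows "1-lipschitz_on {0..1} (diag_hat \<delta>)"
proof (rule lipschitz_onI)
  have incr: "0 \<le> \<delta> v - \<delta> u \<and> \<delta> v - \<delta> u \<le> 2 * (v - u)"
    if "u \<in> {0..1}" "v \<in> {0..1}" "u \<le> v" for u v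
    using assms that unfolding is_diagonal_section_def by blast
  fix x y :: real assume "x \<in> {0..1}" "y \<in> {0..1}"
  then show "dist (diag_hat \<delta> x) (diag_hat \<delta> y) \<le> 1 * dist x y"
    using incr[of x y] incr[of y x]
    by (cases "x \<le> y") (auto simp: diag_hat_def dist_real_def abs_le_iff)
qed simp

lemma diag_hat_nonneg: "is_diagonal_section \<delta> \<Longrightarrow> t \<in> {0..1} \<Longrightarrow> 0 \<le> diag_hat \<delta> t"
  by (simp add: is_diagonal_section_def diag_hat_def)

lemma diag_hat_0:
  assumes "is_diagonal_section \<delta>"
  shows "diag_hat \<delta> 0 = 0"
  using assms[unfolded is_diagonal_section_def, THEN conjunct1, THEN bspec, of 0]
  by (simp add: diag_hat_def)

lemma diag_hat_1: "is_diagonal_section \<delta> \<Longrightarrow> diag_hat \<delta> 1 = 0"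
  by (simp add: is_diagonal_section_def diag_hat_def)

theorem theorem3p3:
  fixes \<delta> :: "real \<Rightarrow> real"
  assumes "is_diagonal_section \<delta>"
  shows "is_copula (U_delta \<delta>) \<and> (\<forall>t\<in>{0..1}. U_delta \<delta> t t = \<delta> t)"
proof -
  define h where "h = diag_hat \<delta>"
  define V where "V = TV_pos h 0"
  have lip: "1-lipschitz_on {0..1} h"
    unfolding h_def using assms by (rule diag_hat_lipschitz)
  have U_eq: "U_delta \<delta> x y = U_of h V x y" if "x \<in> {0..1}" "y \<in> {0..1}" for x y
    using TV_eq_diff_TV_pos[OF bdd_above_variation_sums_lipschitz[OF lip] that]
    by (simp add: U_delta_def U_of_def h_def V_def)
  have "\<bar>h y - h x\<bar> \<le> V y - V x \<and> V y - V x \<le> y - x"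
    if "0 \<le> x" "x \<le> y" "y \<le> 1" for x y
    using TV_pos_increment_lipschitz[OF lip that] by (simp add: V_def)
  then have "is_copula (U_of h V)"
    using assms by (intro is_copula_U_of) (simp_all add: h_def diag_hat_0 diag_hat_1)
  moreover have "U_delta \<delta> t t = \<delta> t" if "t \<in> {0..1}" for t
    using U_eq[OF that that] U_of_diagonal[of h t, OF diag_hat_nonneg[OF assms that, folded h_def]]
    by (simp add: h_def diag_hat_def)
  ultimately show ?thesis
    using U_eq is_copula_cong by blast
qed

end
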